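(* Let $A$ be a non-zero $n\times m$ matrix with entries in $[0,1]$. Suppose the row player plays the multiplicative weight update (MWU) algorithm with a non-increasing step size sequence $(\mu_t)$ such that $\lim_{T\to\infty}\sum_{t=1}^T\mu_t=\infty$ and there exists $t'\in\mathbb{N}$ with $\mu_{t'}\le1$, and the column player plays the LRCA algorithm. Then there exists a minimax strategy $\bar x^*$ of the row player such that $\lim_{t\to\infty}RE(\bar x^*\|x_t)=0$, and hence $\lim_{t\to\infty}x_t=\bar x^*$.
   Context: Repeated two-player zero-sum game: at round $t=1,2,\dots$ the row player plays $x_t\in\Delta_n$, the column player plays $y_t\in\Delta_m$; the row player minimizes, the column player maximizes $x_t^\top Ay_t$. $v$ is the value of the game and $f(x):=\max_{y\in\Delta_m}x^\top Ay$; a minimax strategy of the row player is $x$ with $f(x)=v$, of the column player is $y$ with $\min_{x\in\Delta_n}x^\top Ay=v$. Relative entropy: $RE(X_1\|X_2)=\sum_{i}X_1(i)\log\frac{X_1(i)}{X_2(i)}$. MWU for the row player: from an initial $x_1$ with all entries positive, $x_{t+1}(i)=x_t(i)e^{-\mu_t e_i^\top Ay_t}/\sum_j x_t(j)e^{-\mu_t e_j^\top Ay_t}$, $\mu_t\ge0$. LRCA for the column player (who knows $A$ and fixes a minimax strategy $y^*$ of the column player): at odd rounds $y_t=y^*$; at even rounds $t$, $e_t\in\arg\max_{e\in\{e_1,\dots,e_m\}}x_{t-1}^\top Ae$, $\alpha_t=\frac{f(x_{t-1})-v}{\max(n/4,2)}$, $y_t=(1-\alpha_t)y^*+\alpha_te_t$.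 *)

theory Defs
  imports "HOL-Analysis.Analysis"
begin

(* Vectors of length k are functions nat => real, only indices < k matter.
   An n x m matrix is A :: nat => nat => real with A i j for i < n, j < m. *)

definition prob_simplex :: "nat \<Rightarrow> (nat \<Rightarrow> real) set" where
  "prob_simplex k = {x. (\<forall>i<k. 0 \<le> x i) \<and> (\<Sum>i<k. x i) = 1}"

definition payoff :: "nat \<Rightarrow> nat \<Rightarrow> (nat \<Rightarrow> nat \<Rightarrow> real) \<Rightarrow> (nat \<Rightarrow> real) \<Rightarrow> (nat \<Rightarrow> real) \<Rightarrow> real" where
  "payoff n m A x y = (\<Sum>i<n. \<Sum>j<m. x i * A i j * y j)"

definition fmax :: "nat \<Rightarrow> nat \<Rightarrow> (nat \<Rightarrow> nat \<Rightarrow> real) \<Rightarrow> (nat \<Rightarrow> real) \<Rightarrow> real" where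
  "fmax n m A x = (SUP y\<in>prob_simplex m. payoff n m A x y)"

definition game_value :: "nat \<Rightarrow> nat \<Rightarrow> (nat \<Rightarrow> nat \<Rightarrow> real) \<Rightarrow> real" where
  "game_value n m A = (INF x\<in>prob_simplex n. fmax n m A x)"

definition row_minimax :: "nat \<Rightarrow> nat \<Rightarrow> (nat \<Rightarrow> nat \<Rightarrow> real) \<Rightarrow> (nat \<Rightarrow> real) \<Rightarrow> bool" where
  "row_minimax n m A x \<longleftrightarrow> x \<in> prob_simplex n \<and> fmax n m A x = game_value n m A"

definition col_minimax :: "nat \<Rightarrow> nat \<Rightarrow> (nat \<Rightarrow> nat \<Rightarrow> real) \<Rightarrow> (nat \<Rightarrow> real) \<Rightarrow> bool" where
  "col_minimax n m A y \<longleftrightarrow> y \<in> prob_simplex m \<and>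
     (INF x\<in>prob_simplex n. payoff n m A x y) = game_value n m A"

definition unitv :: "nat \<Rightarrow> nat \<Rightarrow> real" where
  "unitv j = (\<lambda>k. if k = j then 1 else 0)"

definition rel_entropy :: "nat \<Rightarrow> (nat \<Rightarrow> real) \<Rightarrow> (nat \<Rightarrow> real) \<Rightarrow> real" where
  "rel_entropy n X1 X2 = (\<Sum>i<n. if X1 i = 0 then 0 else X1 i * ln (X1 i / X2 i))"

end

theory Submission
  imports Defs
begin

text \<open>
  Fix a minimax strategy \<open>p\<close> of the row player and take \<open>RE(p || x\<^sub>t)\<close> as potential.
  In an odd round every row earns at least \<open>v\<close> against \<open>y*\<close>, so the normalizer \<open>W\<^sub>s\<close>
  of the weights \<open>exp (-\<mu>\<^sub>s ((A y*)\<^sub>k - v))\<close> is at most 1 and the potential drops by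
  \<open>-ln W\<^sub>s \<ge> 1 - W\<^sub>s\<close>. This round lowers the payoff of the best response \<open>e\<close> to \<open>x\<^sub>s\<close> by at
  most \<open>1 - W\<^sub>s\<close>; hence in the following even round, where LRCA shifts weight
  \<open>(f(x\<^sub>s) - v)/c\<close> (\<open>c = max (n/4) 2\<close>) onto \<open>e\<close>, the two rounds together lower the potential
  by at least \<open>\<mu>\<^sub>s\<^sub>+\<^sub>1 (f(x\<^sub>s) - v)\<^sup>2 / (2c)\<close> once \<open>\<mu> \<le> 1\<close>. As \<open>\<Sum> \<mu>\<^sub>t = \<infinity>\<close> and \<open>\<mu>\<close> is nonincreasing,
  \<open>f(x\<^sub>s) \<rightarrow> v\<close> along odd times, and by compactness of the simplex a subsequence of these
  \<open>x\<^sub>s\<close> converges to a minimax strategy \<open>x\<^sup>*\<close>. The potential for \<open>x\<^sup>*\<close> tends to 0 along the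
  subsequence and does not increase from odd times on, so \<open>RE(x\<^sup>* || x\<^sub>t) \<rightarrow> 0\<close>; as it
  dominates the squared Hellinger distance, \<open>x\<^sub>t \<rightarrow> x\<^sup>*\<close>.
\<close>

lemma exp_le_quadratic:
  fixes s :: real
  assumes "s \<le> 1"
  shows "exp s \<le> 1 + s + s\<^sup>2"
proof (cases "0 \<le> s")
  case True
  then show ?thesis using exp_bound assms by blast
next
  case False
  define z where "z = - s"
  have "0 \<le> z" using False by (simp add: z_def)
  have "1 - z + z\<^sup>2 = (z - 1/2)\<^sup>2 + 3/4" by (simp add: power2_eq_square algebra_simps)
  then have pos: "0 < 1 - z + z\<^sup>2" using zero_le_power2[of "z - 1/2"] by linarith
  \<comment> \<open>\<open>(1 + z) (1 - z + z\<^sup>2) = 1 + z\<^sup>3\<close> together with \<open>1 + z \<le> exp z\<close>\<close>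
  have "1 + z^3 \<le> exp z * (1 - z + z\<^sup>2)"
  proof -
    have "(1 + z) * (1 - z + z\<^sup>2) \<le> exp z * (1 - z + z\<^sup>2)"
      using pos exp_ge_add_one_self[of z] by (intro mult_right_mono) auto
    then show ?thesis by (simp add: algebra_simps power2_eq_square power3_eq_cube)
  qed
  then have "1 \<le> exp z * (1 - z + z\<^sup>2)" using zero_le_power[OF \<open>0 \<le> z\<close>, of 3] by linarith
  then have "exp (- z) \<le> 1 - z + z\<^sup>2" using pos by (simp add: exp_minus field_simps)
  then show ?thesis by (simp add: z_def)
qed

lemma exp_minus_mult_le:
  fixes P d :: real
  assumes "0 \<le> P" "P \<le> 1" "\<bar>d\<bar> \<le> 1"
  shows "exp (- (P * d)) \<le> 1 - P * d + P\<^sup>2"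
proof -
  have "\<bar>P * d\<bar> \<le> P" using assms by (simp add: abs_mult mult_left_le)
  then have "- (P * d) \<le> 1" "(P * d)\<^sup>2 \<le> P\<^sup>2"
    using assms power_mono[of "\<bar>P * d\<bar>" P 2] by auto
  then show ?thesis using exp_le_quadratic[of "- (P * d)"] by simp
qed

lemma mult_ln_divide_ge:
  fixes a b :: real
  assumes "0 < a" "0 < b"
  shows "2 * a - 2 * sqrt a * sqrt b \<le> a * ln (a / b)"
proof -
  have "ln (sqrt b / sqrt a) \<le> sqrt b / sqrt a - 1"
    using assms by (intro ln_le_minus_one) auto
  moreover have "ln (sqrt b / sqrt a) = - ln (a / b) / 2"
    using assms by (simp add: ln_div ln_sqrt)
  ultimately have "2 - 2 * sqrt b / sqrt a \<le> ln (a / b)" by linarith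
  then have "a * (2 - 2 * sqrt b / sqrt a) \<le> a * ln (a / b)"
    using assms by (intro mult_left_mono) auto
  moreover have "a * (2 - 2 * sqrt b / sqrt a) = 2 * a - 2 * sqrt a * sqrt b"
    using assms by (simp add: field_simps real_sqrt_mult[symmetric])
  ultimately show ?thesis by simp
qed

lemma prob_simplex_le_1:
  assumes "p \<in> prob_simplex n" "i < n"
  shows "0 \<le> p i" "p i \<le> 1"
proof -
  show "0 \<le> p i" using assms by (simp add: prob_simplex_def)
  have "p i \<le> (\<Sum>k<n. p k)"
    using assms by (intro member_le_sum) (auto simp: prob_simplex_def)
  then show "p i \<le> 1" using assms(1) by (simp add: prob_simplex_def)
qed

lemma tendsto_zero_of_dominating_subseq:
  fixes f :: "nat \<Rightarrow> real"
  assumes dom: "\<forall>k. \<forall>t\<ge>\<sigma> k. 0 \<le> f t \<and> f t \<le> f (\<sigma> k)" and lim: "(\<lambda>k. f (\<sigma> k)) \<longlonglongrightarrow> 0"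
  shows "f \<longlonglongrightarrow> 0"
proof (rule LIMSEQ_I)
  fix r :: real
  assume "0 < r"
  then obtain k where "\<bar>f (\<sigma> k)\<bar> < r" using LIMSEQ_D[OF lim] by fastforce
  then show "\<exists>k0. \<forall>t\<ge>k0. norm (f t - 0) < r"
    using dom by (intro exI[of _ "\<sigma> k"]) fastforce
qed

section \<open>Relative entropy\<close>

lemma hellinger_le_rel_entropy:
  assumes p: "p \<in> prob_simplex n" and q: "q \<in> prob_simplex n" and q_pos: "\<forall>i<n. 0 < q i"
  shows "(\<Sum>i<n. (sqrt (p i) - sqrt (q i))\<^sup>2) \<le> rel_entropy n p q"
proof -
  have term_le: "(sqrt (p i) - sqrt (q i))\<^sup>2 + (p i - q i)
      \<le> (if p i = 0 then 0 else p i * ln (p i / q i))" if "i < n" for i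
  proof (cases "p i = 0")
    case True
    then show ?thesis using q_pos that by (simp add: less_imp_le)
  next
    case False
    then have "0 < p i" using p that by (auto simp: prob_simplex_def less_le)
    then show ?thesis
      using mult_ln_divide_ge[of "p i" "q i"] q_pos that False
      by (simp add: power2_diff less_imp_le)
  qed
  have "(\<Sum>i<n. p i - q i) = 0"
    using p q by (simp add: sum_subtractf prob_simplex_def)
  then have "(\<Sum>i<n. (sqrt (p i) - sqrt (q i))\<^sup>2)
      = (\<Sum>i<n. (sqrt (p i) - sqrt (q i))\<^sup>2 + (p i - q i))"
    by (simp add: sum.distrib)
  also have "\<dots> \<le> rel_entropy n p q"
    unfolding rel_entropy_def by (intro sum_mono) (simp add: term_le)
  finally show ?thesis .
qed

lemma rel_entropy_nonneg:
  assumes "p \<in> prob_simplex n" "q \<in> prob_simplex n" "\<forall>i<n. 0 < q i"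
  shows "0 \<le> rel_entropy n p q"
  using hellinger_le_rel_entropy[OF assms] sum_nonneg[of "{..<n}" "\<lambda>i. (sqrt (p i) - sqrt (q i))\<^sup>2"]
  by simp

lemma abs_diff_le_rel_entropy:
  assumes p: "p \<in> prob_simplex n" and q: "q \<in> prob_simplex n" "\<forall>i<n. 0 < q i" and i: "i < n"
  shows "\<bar>q i - p i\<bar> \<le> 2 * sqrt (rel_entropy n p q)"
proof -
  have "(sqrt (p i) - sqrt (q i))\<^sup>2 \<le> (\<Sum>i<n. (sqrt (p i) - sqrt (q i))\<^sup>2)"
    using i by (intro member_le_sum) auto
  also have "\<dots> \<le> rel_entropy n p q" using hellinger_le_rel_entropy[OF p q] .
  finally have "sqrt ((sqrt (p i) - sqrt (q i))\<^sup>2) \<le> sqrt (rel_entropy n p q)"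
    by (rule real_sqrt_le_mono)
  then have root: "\<bar>sqrt (p i) - sqrt (q i)\<bar> \<le> sqrt (rel_entropy n p q)"
    by simp
  have p01: "0 \<le> p i" "p i \<le> 1" and q01: "0 \<le> q i" "q i \<le> 1"
    using prob_simplex_le_1 p q(1) i by auto
  have "q i - p i = (sqrt (q i) - sqrt (p i)) * (sqrt (q i) + sqrt (p i))"
    using p01 q01 by (simp add: algebra_simps)
  then have "\<bar>q i - p i\<bar> = \<bar>sqrt (p i) - sqrt (q i)\<bar> * (sqrt (q i) + sqrt (p i))"
    using p01 q01 by (simp add: abs_mult abs_minus_commute)
  also have "\<dots> \<le> sqrt (rel_entropy n p q) * 2"
  proof (intro mult_mono root)
    show "sqrt (q i) + sqrt (p i) \<le> 2" using add_mono[of "sqrt (q i)" 1 "sqrt (p i)" 1] p01 q01 by simp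
  qed (use p01 q01 rel_entropy_nonneg[OF p q] in auto)
  finally show ?thesis by simp
qed

lemma tendsto_rel_entropy_zero:
  assumes p: "p \<in> prob_simplex n" and lim: "\<forall>i<n. (\<lambda>k. q k i) \<longlonglongrightarrow> p i"
  shows "(\<lambda>k. rel_entropy n p (q k)) \<longlonglongrightarrow> 0"
proof -
  have "(\<lambda>k. if p i = 0 then 0 else p i * ln (p i / q k i)) \<longlonglongrightarrow> 0" if i: "i < n" for i
  proof (cases "p i = 0")
    case False
    then have "0 < p i" using p i by (auto simp: prob_simplex_def less_le)
    then have "(\<lambda>k. p i * ln (p i / q k i)) \<longlonglongrightarrow> p i * ln (p i / p i)"
      using lim i by (intro tendsto_intros) auto
    then show ?thesis using False by simp
  qed simp
  then have "(\<lambda>k. rel_entropy n p (q k)) \<longlonglongrightarrow> (\<Sum>i<n. 0)"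
    unfolding rel_entropy_def by (intro tendsto_sum) auto
  then show ?thesis by simp
qed

lemma tendsto_of_rel_entropy_tendsto_zero:
  assumes p: "p \<in> prob_simplex n"
    and q: "eventually (\<lambda>k. q k \<in> prob_simplex n \<and> (\<forall>i<n. 0 < q k i)) sequentially"
    and lim: "(\<lambda>k. rel_entropy n p (q k)) \<longlonglongrightarrow> 0"
    and i: "i < n"
  shows "(\<lambda>k. q k i) \<longlonglongrightarrow> p i"
proof -
  have "eventually (\<lambda>k. norm (q k i - p i) \<le> 2 * sqrt (rel_entropy n p (q k))) sequentially"
    using q by (rule eventually_mono) (use abs_diff_le_rel_entropy[OF p _ _ i] in simp)
  moreover have "(\<lambda>k. 2 * sqrt (rel_entropy n p (q k))) \<longlonglongrightarrow> 0"
    using tendsto_mult_left[OF tendsto_real_sqrt[OF lim], of 2] by simp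
  ultimately have "(\<lambda>k. q k i - p i) \<longlonglongrightarrow> 0"
    by (rule Lim_null_comparison)
  then show ?thesis by (simp add: LIM_zero_iff)
qed

lemma bounded_coords_convergent_subseq:
  fixes z :: "nat \<Rightarrow> nat \<Rightarrow> real"
  assumes "\<forall>k. \<forall>i<K. \<bar>z k i\<bar> \<le> B"
  shows "\<exists>r L. strict_mono r \<and> (\<forall>i<K. (\<lambda>k. z (r k) i) \<longlonglongrightarrow> L i)"
  using assms
proof (induction K)
  case 0
  show ?case using strict_mono_id by blast
next
  case (Suc K)
  then obtain r L where r: "strict_mono r" and L: "\<forall>i<K. (\<lambda>k. z (r k) i) \<longlonglongrightarrow> L i"
    by auto
  have "bounded (range (\<lambda>k. z (r k) K))"
    unfolding bounded_real using Suc.prems by auto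
  then obtain l r' where r': "strict_mono r'" and l: "((\<lambda>k. z (r k) K) \<circ> r') \<longlonglongrightarrow> l"
    using bounded_imp_convergent_subsequence by blast
  have "(\<lambda>k. z ((r \<circ> r') k) i) \<longlonglongrightarrow> (L(K := l)) i" if "i < Suc K" for i
  proof (cases "i = K")
    case False
    then have "((\<lambda>k. z (r k) i) \<circ> r') \<longlonglongrightarrow> L i"
      using L r' that by (intro LIMSEQ_subseq_LIMSEQ) auto
    then show ?thesis using False by (simp add: o_def)
  qed (use l in \<open>simp add: o_def\<close>)
  then show ?case using strict_mono_o[OF r r'] by blast
qed

lemma prob_simplex_convergent_subseq:
  fixes z :: "nat \<Rightarrow> nat \<Rightarrow> real"
  assumes z: "\<forall>k. z k \<in> prob_simplex n"
  shows "\<exists>r L. strict_mono r \<and> L \<in> prob_simplex n \<and> (\<forall>i<n. (\<lambda>k. z (r k) i) \<longlonglongrightarrow> L i)"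
proof -
  have "\<forall>k. \<forall>i<n. \<bar>z k i\<bar> \<le> 1"
    using z prob_simplex_le_1 by (metis abs_of_nonneg)
  then obtain r L where r: "strict_mono r" and L: "\<forall>i<n. (\<lambda>k. z (r k) i) \<longlonglongrightarrow> L i"
    using bounded_coords_convergent_subseq[of n z 1] by blast
  have "0 \<le> L i" if "i < n" for i
    using L z that by (intro LIMSEQ_le_const[of "\<lambda>k. z (r k) i"]) (auto simp: prob_simplex_def)
  moreover have "(\<lambda>k. \<Sum>i<n. z (r k) i) \<longlonglongrightarrow> (\<Sum>i<n. L i)"
    using L by (intro tendsto_sum) auto
  then have "(\<lambda>k. 1) \<longlonglongrightarrow> (\<Sum>i<n. L i)"
    using z by (simp add: prob_simplex_def)
  then have "(\<Sum>i<n. L i) = 1"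
    by (simp add: LIMSEQ_const_iff)
  ultimately show ?thesis using r L by (auto simp: prob_simplex_def)
qed

section \<open>Matrix games\<close>

definition col_payoff :: "nat \<Rightarrow> (nat \<Rightarrow> nat \<Rightarrow> real) \<Rightarrow> (nat \<Rightarrow> real) \<Rightarrow> nat \<Rightarrow> real" where
  "col_payoff n A z j = (\<Sum>i<n. z i * A i j)"

definition row_payoff :: "nat \<Rightarrow> (nat \<Rightarrow> nat \<Rightarrow> real) \<Rightarrow> (nat \<Rightarrow> real) \<Rightarrow> nat \<Rightarrow> real" where
  "row_payoff m A w i = (\<Sum>j<m. A i j * w j)"

lemma payoff_eq_sum_row_payoff: "payoff n m A z w = (\<Sum>i<n. z i * row_payoff m A w i)"
  by (simp add: payoff_def row_payoff_def sum_distrib_left mult.assoc)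

lemma payoff_eq_sum_col_payoff: "payoff n m A z w = (\<Sum>j<m. w j * col_payoff n A z j)"
  unfolding payoff_def col_payoff_def
  by (subst sum.swap) (simp add: sum_distrib_left algebra_simps)

lemma sum_unitv_mult:
  fixes f :: "nat \<Rightarrow> real"
  assumes "j < m"
  shows "(\<Sum>k<m. unitv j k * f k) = f j"
proof -
  have "(\<Sum>k<m. unitv j k * f k) = (\<Sum>k<m. if k = j then f k else 0)"
    by (intro sum.cong) (auto simp: unitv_def)
  then show ?thesis using assms by simp
qed

lemma payoff_unitv_right: "j < m \<Longrightarrow> payoff n m A z (unitv j) = col_payoff n A z j"
  unfolding payoff_eq_sum_col_payoff by (rule sum_unitv_mult)

lemma payoff_unitv_left: "i < n \<Longrightarrow> payoff n m A (unitv i) w = row_payoff m A w i"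
  unfolding payoff_eq_sum_row_payoff by (rule sum_unitv_mult)

lemma unitv_in_prob_simplex: "i < k \<Longrightarrow> unitv i \<in> prob_simplex k"
  unfolding prob_simplex_def unitv_def by (simp add: if_distrib cong: if_cong)

lemma prob_simplex_convex:
  assumes "p \<in> prob_simplex k" "q \<in> prob_simplex k" "0 \<le> \<theta>" "\<theta> \<le> 1"
  shows "(\<lambda>j. (1 - \<theta>) * p j + \<theta> * q j) \<in> prob_simplex k"
  using assms by (simp add: prob_simplex_def sum.distrib sum_distrib_left[symmetric])

lemma payoff_le_Max_col_payoff:
  assumes "w \<in> prob_simplex m"
  shows "payoff n m A z w \<le> Max (col_payoff n A z ` {..<m})"
proof -
  have "payoff n m A z w \<le> (\<Sum>j<m. w j * Max (col_payoff n A z ` {..<m}))"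
    unfolding payoff_eq_sum_col_payoff
    using assms by (intro sum_mono mult_left_mono) (auto simp: prob_simplex_def)
  also have "\<dots> = Max (col_payoff n A z ` {..<m})"
    using assms by (simp add: prob_simplex_def sum_distrib_right[symmetric])
  finally show ?thesis .
qed

lemma fmax_eq_Max_col_payoff:
  assumes "1 \<le> m"
  shows "fmax n m A z = Max (col_payoff n A z ` {..<m})"
  unfolding fmax_def
proof (rule cSup_eq_maximum)
  have "Max (col_payoff n A z ` {..<m}) \<in> col_payoff n A z ` {..<m}"
    using assms by (intro Max_in) (auto simp: lessThan_empty_iff)
  then obtain j where "j < m" "col_payoff n A z j = Max (col_payoff n A z ` {..<m})"
    by auto
  then show "Max (col_payoff n A z ` {..<m}) \<in> payoff n m A z ` prob_simplex m"
    using unitv_in_prob_simplex payoff_unitv_right by (metis image_eqI)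
qed (use payoff_le_Max_col_payoff in blast)

lemma col_payoff_le_fmax: "1 \<le> m \<Longrightarrow> j < m \<Longrightarrow> col_payoff n A z j \<le> fmax n m A z"
  by (simp add: fmax_eq_Max_col_payoff)

lemma fmax_attained: "1 \<le> m \<Longrightarrow> \<exists>j<m. fmax n m A z = col_payoff n A z j"
  using Max_in[of "col_payoff n A z ` {..<m}"] by (fastforce simp: fmax_eq_Max_col_payoff)

lemma payoff_le_fmax: "1 \<le> m \<Longrightarrow> w \<in> prob_simplex m \<Longrightarrow> payoff n m A z w \<le> fmax n m A z"
  using payoff_le_Max_col_payoff by (simp add: fmax_eq_Max_col_payoff)

locale matrix_game =
  fixes n m :: nat and A :: "nat \<Rightarrow> nat \<Rightarrow> real"
  assumes n_pos: "n \<ge> 1" and m_pos: "m \<ge> 1"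
    and A_range: "\<forall>i<n. \<forall>j<m. 0 \<le> A i j \<and> A i j \<le> 1"
begin

abbreviation v :: real where "v \<equiv> game_value n m A"

lemma col_payoff_bounds:
  assumes "z \<in> prob_simplex n" "j < m"
  shows "0 \<le> col_payoff n A z j" "col_payoff n A z j \<le> 1"
proof -
  show "0 \<le> col_payoff n A z j"
    using assms A_range unfolding col_payoff_def prob_simplex_def by (intro sum_nonneg) auto
  have "col_payoff n A z j \<le> (\<Sum>i<n. z i)"
    using assms A_range unfolding col_payoff_def prob_simplex_def
    by (intro sum_mono) (simp add: mult_left_le)
  then show "col_payoff n A z j \<le> 1" using assms(1) by (simp add: prob_simplex_def)
qed

lemma fmax_bounds:
  assumes "z \<in> prob_simplex n"
  shows "0 \<le> fmax n m A z" "fmax n m A z \<le> 1"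
  using fmax_attained[OF m_pos] col_payoff_bounds[OF assms] by (metis)+

lemma payoff_nonneg:
  assumes "z \<in> prob_simplex n" "w \<in> prob_simplex m"
  shows "0 \<le> payoff n m A z w"
  unfolding payoff_eq_sum_col_payoff
  using assms col_payoff_bounds by (intro sum_nonneg mult_nonneg_nonneg) (auto simp: prob_simplex_def)

lemma game_value_le_fmax: "z \<in> prob_simplex n \<Longrightarrow> v \<le> fmax n m A z"
  unfolding game_value_def
  by (rule cINF_lower[OF bdd_belowI2[of _ 0]]) (auto intro: fmax_bounds)

lemma game_value_bounds: "0 \<le> v" "v \<le> 1"
  using game_value_le_fmax fmax_bounds unitv_in_prob_simplex[of 0 n] n_pos
    cINF_greatest[of "prob_simplex n" 0 "fmax n m A"]
  by (fastforce simp: game_value_def)+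

lemma col_minimax_le_payoff:
  assumes "col_minimax n m A y" "z \<in> prob_simplex n"
  shows "v \<le> payoff n m A z y"
proof -
  have "(INF x\<in>prob_simplex n. payoff n m A x y) \<le> payoff n m A z y"
    using assms payoff_nonneg
    by (intro cINF_lower[OF bdd_belowI2[of _ 0]]) (auto simp: col_minimax_def)
  then show ?thesis using assms(1) by (simp add: col_minimax_def)
qed

lemma row_minimax_payoff_le:
  "row_minimax n m A x \<Longrightarrow> w \<in> prob_simplex m \<Longrightarrow> payoff n m A x w \<le> v"
  using payoff_le_fmax[OF m_pos, of w n A x] by (auto simp: row_minimax_def)

lemma tendsto_fmax_game_value:
  assumes "\<forall>k. z k \<in> prob_simplex n \<and> fmax n m A (z k) < v + inverse (real (Suc k))"
  shows "(\<lambda>k. fmax n m A (z k)) \<longlonglongrightarrow> v"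
proof (rule tendsto_sandwich)
  show "\<forall>\<^sub>F k in sequentially. v \<le> fmax n m A (z k)"
    using assms game_value_le_fmax by simp
  show "\<forall>\<^sub>F k in sequentially. fmax n m A (z k) \<le> v + inverse (real (Suc k))"
    using assms by (simp add: less_imp_le)
  show "(\<lambda>k. v + inverse (real (Suc k))) \<longlonglongrightarrow> v"
    using tendsto_add[OF tendsto_const LIMSEQ_inverse_real_of_nat, of v] by simp
qed simp

lemma convergent_subseq_row_minimax:
  assumes z: "\<forall>k. z k \<in> prob_simplex n" and lim: "(\<lambda>k. fmax n m A (z k)) \<longlonglongrightarrow> v"
  shows "\<exists>r xbar. strict_mono r \<and> row_minimax n m A xbar \<and> (\<forall>i<n. (\<lambda>k. z (r k) i) \<longlonglongrightarrow> xbar i)"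
proof -
  obtain r L where r: "strict_mono r" and L: "L \<in> prob_simplex n"
    and conv: "\<forall>i<n. (\<lambda>k. z (r k) i) \<longlonglongrightarrow> L i"
    using prob_simplex_convergent_subseq[OF z] by blast
  obtain j where j: "j < m" "fmax n m A L = col_payoff n A L j"
    using fmax_attained[OF m_pos] by blast
  have "(\<lambda>k. col_payoff n A (z (r k)) j) \<longlonglongrightarrow> col_payoff n A L j"
    unfolding col_payoff_def using conv by (intro tendsto_intros) auto
  moreover have "(\<lambda>k. fmax n m A (z (r k))) \<longlonglongrightarrow> v"
    using LIMSEQ_subseq_LIMSEQ[OF lim r] by (simp add: o_def)
  ultimately have "col_payoff n A L j \<le> v"
    using col_payoff_le_fmax[OF m_pos j(1)] by (intro tendsto_le[OF _ _ ]) (auto intro: always_eventually)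
  then have "fmax n m A L = v" using game_value_le_fmax[OF L] j(2) by simp
  then show ?thesis using r L conv by (auto simp: row_minimax_def)
qed

lemma ex_row_minimax: "\<exists>x. row_minimax n m A x"
proof -
  have ne: "prob_simplex n \<noteq> {}" using unitv_in_prob_simplex[of 0 n] n_pos by auto
  have bdd: "bdd_below (fmax n m A ` prob_simplex n)"
    by (intro bdd_belowI2[of _ 0]) (simp add: fmax_bounds)
  have "\<exists>z\<in>prob_simplex n. fmax n m A z < v + inverse (real (Suc k))" for k
    using cINF_less_iff[OF ne bdd, of "v + inverse (real (Suc k))"] by (simp add: game_value_def)
  then obtain z where "\<forall>k. z k \<in> prob_simplex n \<and> fmax n m A (z k) < v + inverse (real (Suc k))"
    by metis
  then show ?thesis
    using convergent_subseq_row_minimax tendsto_fmax_game_value by blast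
qed

end

section \<open>Multiplicative weights\<close>

locale mwu_dynamics =
  fixes n m :: nat and A :: "nat \<Rightarrow> nat \<Rightarrow> real"
    and mu :: "nat \<Rightarrow> real" and x y :: "nat \<Rightarrow> nat \<Rightarrow> real"
  assumes x1: "x 1 \<in> prob_simplex n" and x1_pos: "\<forall>i<n. 0 < x 1 i"
    and mwu: "\<forall>t\<ge>1. \<forall>i<n. x (Suc t) i =
        x t i * exp (- mu t * (\<Sum>j<m. A i j * y t j)) /
        (\<Sum>k<n. x t k * exp (- mu t * (\<Sum>j<m. A k j * y t j)))"
begin

definition normalizer :: "nat \<Rightarrow> real" where
  "normalizer t = (\<Sum>k<n. x t k * exp (- mu t * row_payoff m A (y t) k))"

lemma mwu_step:
  "1 \<le> t \<Longrightarrow> i < n \<Longrightarrow> x (Suc t) i = x t i * exp (- mu t * row_payoff m A (y t) i) / normalizer t"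
  using mwu by (simp add: row_payoff_def normalizer_def)

lemma x_in_prob_simplex_pos: "1 \<le> t \<Longrightarrow> x t \<in> prob_simplex n \<and> (\<forall>i<n. 0 < x t i)"
proof (induction t rule: dec_induct)
  case base
  then show ?case using x1 x1_pos by simp
next
  case (step t)
  then have pos: "0 < x t k * exp (- mu t * row_payoff m A (y t) k)" if "k < n" for k
    using that by simp
  have n: "{..<n} \<noteq> {}" using step.IH by (auto simp: prob_simplex_def)
  have Z: "0 < normalizer t"
    unfolding normalizer_def using pos n by (intro sum_pos) auto
  have "(\<Sum>i<n. x (Suc t) i) = (\<Sum>i<n. x t i * exp (- mu t * row_payoff m A (y t) i)) / normalizer t"
    using mwu_step[OF step.hyps(1)] by (simp add: sum_divide_distrib)
  also have "\<dots> = 1" using Z by (simp add: normalizer_def)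
  finally show ?case
    using Z pos by (auto simp: prob_simplex_def mwu_step[OF step.hyps(1)] less_imp_le)
qed

lemma x_in_prob_simplex: "1 \<le> t \<Longrightarrow> x t \<in> prob_simplex n"
  and x_pos: "1 \<le> t \<Longrightarrow> i < n \<Longrightarrow> 0 < x t i"
  using x_in_prob_simplex_pos by auto

lemma normalizer_pos: "1 \<le> t \<Longrightarrow> 0 < normalizer t"
  unfolding normalizer_def using x_in_prob_simplex[of t] x_pos[of t]
  by (intro sum_pos) (auto simp: prob_simplex_def)

lemma rel_entropy_step:
  assumes t: "1 \<le> t" and p: "p \<in> prob_simplex n"
  shows "rel_entropy n p (x (Suc t))
    = rel_entropy n p (x t) + mu t * payoff n m A p (y t) + ln (normalizer t)"
proof -
  have "x (Suc t) i = x t i / (normalizer t * exp (mu t * row_payoff m A (y t) i))" if "i < n" for i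
    using mwu_step[OF t that] by (simp add: exp_minus field_simps)
  then have log_ratio: "ln (p i / x (Suc t) i)
      = ln (p i / x t i) + mu t * row_payoff m A (y t) i + ln (normalizer t)"
    if "i < n" "0 < p i" for i
    using that x_pos[OF t that(1)] normalizer_pos[OF t] by (simp add: ln_div ln_mult)
  have "rel_entropy n p (x (Suc t)) = (\<Sum>i<n. (if p i = 0 then 0 else p i * ln (p i / x t i))
      + p i * (mu t * row_payoff m A (y t) i) + p i * ln (normalizer t))"
    unfolding rel_entropy_def
    using p log_ratio by (intro sum.cong) (auto simp: prob_simplex_def less_le algebra_simps)
  also have "\<dots> = rel_entropy n p (x t) + mu t * payoff n m A p (y t) + ln (normalizer t)"
    using p unfolding rel_entropy_def payoff_eq_sum_row_payoff prob_simplex_def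
    by (simp add: sum.distrib sum_distrib_left sum_distrib_right[symmetric] algebra_simps)
  finally show ?thesis .
qed

end

section \<open>Multiplicative weights against LRCA\<close>

locale mwu_lrca = matrix_game n m A + mwu_dynamics n m A mu x y
  for n m :: nat and A :: "nat \<Rightarrow> nat \<Rightarrow> real" and mu :: "nat \<Rightarrow> real"
    and x y :: "nat \<Rightarrow> nat \<Rightarrow> real" +
  fixes ystar :: "nat \<Rightarrow> real" and e :: "nat \<Rightarrow> nat" and alpha :: "nat \<Rightarrow> real"
  assumes mu_nonneg: "\<forall>t\<ge>1. 0 \<le> mu t"
    and mu_noninc: "\<forall>t\<ge>1. mu (Suc t) \<le> mu t"
    and mu_div: "filterlim (\<lambda>T. \<Sum>t=1..T. mu t) at_top sequentially"
    and mu_small: "\<exists>t'\<ge>1. mu t' \<le> 1"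
    and ystar: "col_minimax n m A ystar"
    and odd_rounds: "\<forall>t\<ge>1. odd t \<longrightarrow> y t = ystar"
    and e_choice: "\<forall>t\<ge>1. even t \<longrightarrow> e t < m \<and>
        (\<forall>j<m. payoff n m A (x (t - 1)) (unitv j) \<le> payoff n m A (x (t - 1)) (unitv (e t)))"
    and alpha_def: "\<forall>t\<ge>1. even t \<longrightarrow>
        alpha t = (fmax n m A (x (t - 1)) - game_value n m A) / max (real n / 4) 2"
    and even_rounds: "\<forall>t\<ge>1. even t \<longrightarrow>
        y t = (\<lambda>j. (1 - alpha t) * ystar j + alpha t * unitv (e t) j)"
begin

abbreviation c :: real where "c \<equiv> max (real n / 4) 2"

lemma mu_antimono: "1 \<le> s \<Longrightarrow> s \<le> t \<Longrightarrow> mu t \<le> mu s"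
  by (rule lift_Suc_antimono_le_ivl[of "{1..}"]) (use mu_noninc in auto)

lemma ystar_in_prob_simplex: "ystar \<in> prob_simplex m"
  using ystar by (simp add: col_minimax_def)

lemma game_value_le_row_payoff_ystar: "i < n \<Longrightarrow> v \<le> row_payoff m A ystar i"
  using col_minimax_le_payoff[OF ystar unitv_in_prob_simplex] payoff_unitv_left by metis

lemma fmax_gap_bounds:
  assumes "1 \<le> t"
  shows "0 \<le> fmax n m A (x t) - v" "fmax n m A (x t) - v \<le> 1"
  using game_value_le_fmax[OF x_in_prob_simplex[OF assms]]
    fmax_bounds[OF x_in_prob_simplex[OF assms]] game_value_bounds
  by auto

lemma alpha_bounds:
  assumes "1 \<le> t" "even t"
  shows "0 \<le> alpha t" "alpha t \<le> (fmax n m A (x (t - 1)) - v) / 2" "alpha t \<le> 1 / 2"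
proof -
  have "t \<noteq> 1" using assms(2) by auto
  then have "1 \<le> t - 1" using assms(1) by linarith
  then have gap: "0 \<le> fmax n m A (x (t - 1)) - v" "fmax n m A (x (t - 1)) - v \<le> 1"
    by (rule fmax_gap_bounds)+
  have alpha: "alpha t = (fmax n m A (x (t - 1)) - v) / c" using alpha_def assms by simp
  show "0 \<le> alpha t" using gap by (simp add: alpha)
  show half_gap: "alpha t \<le> (fmax n m A (x (t - 1)) - v) / 2"
    unfolding alpha by (rule divide_left_mono) (use gap in auto)
  show "alpha t \<le> 1 / 2" using half_gap gap(2) by simp
qed

lemma e_best_response:
  assumes "1 \<le> t" "even t"
  shows "e t < m" "col_payoff n A (x (t - 1)) (e t) = fmax n m A (x (t - 1))"
proof -
  show e: "e t < m" using e_choice assms by blast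
  obtain j where "j < m" "fmax n m A (x (t - 1)) = col_payoff n A (x (t - 1)) j"
    using fmax_attained[OF m_pos] by blast
  moreover have "payoff n m A (x (t - 1)) (unitv j) \<le> payoff n m A (x (t - 1)) (unitv (e t))"
    using e_choice assms \<open>j < m\<close> by blast
  ultimately show "col_payoff n A (x (t - 1)) (e t) = fmax n m A (x (t - 1))"
    using col_payoff_le_fmax[OF m_pos e, of n A "x (t - 1)"]
    by (simp add: payoff_unitv_right e)
qed

lemma y_in_prob_simplex:
  assumes "1 \<le> t"
  shows "y t \<in> prob_simplex m"
proof (cases "odd t")
  case True
  then show ?thesis using odd_rounds assms ystar_in_prob_simplex by simp
next
  case False
  then have "even t" by simp
  have "0 \<le> alpha t" "alpha t \<le> 1"
    using alpha_bounds(1,3)[OF assms \<open>even t\<close>] by auto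
  then show ?thesis
    using even_rounds assms \<open>even t\<close> ystar_in_prob_simplex
      unitv_in_prob_simplex[OF e_best_response(1)[OF assms \<open>even t\<close>]]
    by (simp add: prob_simplex_convex)
qed

lemma row_payoff_y_even:
  assumes "1 \<le> t" "even t"
  shows "row_payoff m A (y t) k = (1 - alpha t) * row_payoff m A ystar k + alpha t * A k (e t)"
proof -
  have "row_payoff m A (y t) k
      = (\<Sum>j<m. (1 - alpha t) * (A k j * ystar j) + alpha t * (unitv (e t) j * A k j))"
    unfolding row_payoff_def using even_rounds assms by (intro sum.cong) (auto simp: algebra_simps)
  also have "\<dots> = (1 - alpha t) * row_payoff m A ystar k + alpha t * (\<Sum>j<m. unitv (e t) j * A k j)"
    by (simp add: row_payoff_def sum.distrib sum_distrib_left)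
  finally show ?thesis using sum_unitv_mult[OF e_best_response(1)[OF assms]] by simp
qed

definition shifted_normalizer :: "nat \<Rightarrow> real" where
  "shifted_normalizer t = exp (mu t * v) * normalizer t"

lemma shifted_normalizer_eq:
  "shifted_normalizer t = (\<Sum>k<n. x t k * exp (- mu t * (row_payoff m A (y t) k - v)))"
  unfolding shifted_normalizer_def normalizer_def sum_distrib_left
  by (intro sum.cong) (auto simp: mult_exp_exp algebra_simps)

lemma shifted_normalizer_pos: "1 \<le> t \<Longrightarrow> 0 < shifted_normalizer t"
  by (simp add: shifted_normalizer_def normalizer_pos)

lemma rel_entropy_step_le:
  assumes p: "row_minimax n m A p" and t: "1 \<le> t"
  shows "rel_entropy n p (x (Suc t)) \<le> rel_entropy n p (x t) + shifted_normalizer t - 1"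
proof -
  have "mu t * payoff n m A p (y t) \<le> mu t * v"
    using mu_nonneg t row_minimax_payoff_le[OF p y_in_prob_simplex[OF t]] by (simp add: mult_left_mono)
  moreover have "ln (normalizer t) = ln (shifted_normalizer t) - mu t * v"
    using normalizer_pos[OF t] by (simp add: shifted_normalizer_def ln_mult)
  moreover have "ln (shifted_normalizer t) \<le> shifted_normalizer t - 1"
    using shifted_normalizer_pos[OF t] by (rule ln_le_minus_one)
  ultimately show ?thesis
    using rel_entropy_step[OF t] p by (simp add: row_minimax_def)
qed

lemma shifted_normalizer_odd_le_1:
  assumes "1 \<le> t" "odd t"
  shows "shifted_normalizer t \<le> 1"
proof -
  have "shifted_normalizer t \<le> (\<Sum>k<n. x t k)"
    unfolding shifted_normalizer_eq
  proof (intro sum_mono)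
    fix k assume "k \<in> {..<n}"
    then have "exp (- mu t * (row_payoff m A ystar k - v)) \<le> 1"
      using game_value_le_row_payoff_ystar mu_nonneg assms by simp
    then show "x t k * exp (- mu t * (row_payoff m A (y t) k - v)) \<le> x t k"
      using odd_rounds assms x_pos \<open>k \<in> {..<n}\<close> by (simp add: mult_left_le)
  qed
  then show ?thesis using x_in_prob_simplex assms by (simp add: prob_simplex_def)
qed

lemma rel_entropy_odd_step:
  "row_minimax n m A p \<Longrightarrow> 1 \<le> t \<Longrightarrow> odd t \<Longrightarrow> rel_entropy n p (x (Suc t)) \<le> rel_entropy n p (x t)"
  using rel_entropy_step_le[of p t] shifted_normalizer_odd_le_1[of t] by linarith

lemma mwu_step_odd:
  assumes "1 \<le> t" "odd t" "k < n"
  shows "x (Suc t) k = x t k * exp (- mu t * (row_payoff m A ystar k - v)) / shifted_normalizer t"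
  using mwu_step[OF assms(1,3)] odd_rounds assms
  by (simp add: shifted_normalizer_def exp_diff exp_minus field_simps)

lemma col_payoff_after_odd_ge:
  assumes s: "1 \<le> s" "odd s" and j: "j < m"
  shows "col_payoff n A (x s) j - (1 - shifted_normalizer s) \<le> col_payoff n A (x (Suc s)) j"
proof -
  define E where "E k = exp (- mu s * (row_payoff m A ystar k - v))" for k
  have E: "0 < E k" "E k \<le> 1" if "k < n" for k
    using game_value_le_row_payoff_ystar[OF that] mu_nonneg s by (auto simp: E_def)
  have b: "0 \<le> A k j" "A k j \<le> 1" if "k < n" for k using A_range that j by auto
  have W: "0 < shifted_normalizer s" "shifted_normalizer s \<le> 1"
    using shifted_normalizer_pos shifted_normalizer_odd_le_1 s by auto
  have W_eq: "shifted_normalizer s = (\<Sum>k<n. x s k * E k)"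
    using odd_rounds s by (simp add: shifted_normalizer_eq E_def)
  have "col_payoff n A (x s) j - (1 - shifted_normalizer s) = (\<Sum>k<n. x s k * A k j - x s k + x s k * E k)"
    using x_in_prob_simplex[OF s(1)]
    by (simp add: col_payoff_def W_eq sum.distrib sum_subtractf prob_simplex_def)
  also have "\<dots> \<le> (\<Sum>k<n. x s k * E k * A k j)"
  proof (intro sum_mono)
    fix k assume "k \<in> {..<n}"
    then have "0 \<le> x s k * ((1 - E k) * (1 - A k j))"
      using x_pos[OF s(1)] E b by (intro mult_nonneg_nonneg) (auto simp: less_imp_le)
    then show "x s k * A k j - x s k + x s k * E k \<le> x s k * E k * A k j"
      by (simp add: algebra_simps)
  qed
  also have "\<dots> \<le> (\<Sum>k<n. x s k * E k * A k j) / shifted_normalizer s"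
  proof -
    have "0 \<le> (\<Sum>k<n. x s k * E k * A k j)"
      using x_pos[OF s(1)] E b by (intro sum_nonneg mult_nonneg_nonneg) (auto simp: less_imp_le)
    then show ?thesis using W by (simp add: le_divide_eq mult_left_le)
  qed
  also have "\<dots> = col_payoff n A (x (Suc s)) j"
    using mwu_step_odd[OF s]
    by (simp add: col_payoff_def sum_divide_distrib E_def algebra_simps)
  finally show ?thesis .
qed

lemma shifted_normalizer_even_le:
  assumes t: "1 \<le> t" "even t" and mu_le: "mu t \<le> 1"
  defines "P \<equiv> mu t * alpha t"
  shows "shifted_normalizer t \<le> 1 - P * (col_payoff n A (x t) (e t) - v) + P\<^sup>2"
proof -
  have alpha: "0 \<le> alpha t" "alpha t \<le> 1"
    using alpha_bounds(1,3)[OF t] by auto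
  have P: "0 \<le> P" "P \<le> 1"
    using alpha mu_le mu_nonneg t by (auto simp: P_def mult_le_one)
  have term_le: "exp (- mu t * (row_payoff m A (y t) k - v)) \<le> 1 - P * (A k (e t) - v) + P\<^sup>2"
    if k: "k < n" for k
  proof -
    have "0 \<le> A k (e t)" "A k (e t) \<le> 1"
      using A_range k e_best_response(1)[OF t] by auto
    then have "\<bar>A k (e t) - v\<bar> \<le> 1" using game_value_bounds by (simp add: abs_le_iff)
    have split: "- mu t * (row_payoff m A (y t) k - v)
        = - (mu t * (1 - alpha t) * (row_payoff m A ystar k - v)) + - (P * (A k (e t) - v))"
      by (simp add: row_payoff_y_even[OF t] P_def algebra_simps)
    have "exp (- mu t * (row_payoff m A (y t) k - v))
        = exp (- (mu t * (1 - alpha t) * (row_payoff m A ystar k - v))) * exp (- (P * (A k (e t) - v)))"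
      by (simp only: split exp_add)
    also have "\<dots> \<le> 1 * exp (- (P * (A k (e t) - v)))"
      using game_value_le_row_payoff_ystar[OF k] alpha mu_nonneg t
      by (intro mult_right_mono) auto
    also have "\<dots> \<le> 1 - P * (A k (e t) - v) + P\<^sup>2"
      using exp_minus_mult_le P \<open>\<bar>A k (e t) - v\<bar> \<le> 1\<close> by simp
    finally show ?thesis .
  qed
  have "shifted_normalizer t \<le> (\<Sum>k<n. x t k * (1 - P * (A k (e t) - v) + P\<^sup>2))"
    unfolding shifted_normalizer_eq
    using term_le x_pos[OF t(1)] by (intro sum_mono mult_left_mono) (auto simp: less_imp_le)
  also have "\<dots> = (\<Sum>k<n. x t k) * (1 + P * v + P\<^sup>2) - P * (\<Sum>k<n. x t k * A k (e t))"
    by (simp add: algebra_simps sum.distrib sum_subtractf sum_distrib_left sum_distrib_right)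
  also have "\<dots> = 1 - P * (col_payoff n A (x t) (e t) - v) + P\<^sup>2"
    using x_in_prob_simplex[OF t(1)] by (simp add: col_payoff_def prob_simplex_def algebra_simps)
  finally show ?thesis .
qed

lemma rel_entropy_pair_step:
  assumes p: "row_minimax n m A p" and s: "1 \<le> s" "odd s" and mu_le: "mu (Suc s) \<le> 1"
  shows "rel_entropy n p (x (Suc (Suc s)))
    \<le> rel_entropy n p (x s) - mu (Suc s) * (fmax n m A (x s) - v)\<^sup>2 / (2 * c)"
proof -
  define t where "t = Suc s"
  have t: "1 \<le> t" "even t" "t - 1 = s" using s by (auto simp: t_def)
  define \<delta> where "\<delta> = fmax n m A (x s) - v"
  define P where "P = mu t * alpha t"
  define W where "W = shifted_normalizer s"
  have \<delta>: "0 \<le> \<delta>" "\<delta> \<le> 1" using fmax_gap_bounds[OF s(1)] by (auto simp: \<delta>_def)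
  have W: "W \<le> 1" using shifted_normalizer_odd_le_1[OF s] by (simp add: W_def)
  have alpha: "alpha t = \<delta> / c" using alpha_def t by (simp add: \<delta>_def)
  have "0 \<le> alpha t" "alpha t \<le> \<delta> / 2" using alpha_bounds[OF t(1,2)] by (auto simp: t_def \<delta>_def)
  then have P: "0 \<le> P" "P \<le> \<delta> / 2"
    using mu_nonneg mu_le t(1) mult_left_le_one_le[of "alpha t" "mu t"] by (auto simp: P_def t_def)
  have "\<delta> + v - (1 - W) \<le> col_payoff n A (x t) (e t)"
    using col_payoff_after_odd_ge[OF s e_best_response(1)[OF t(1,2)]] e_best_response(2)[OF t(1,2)]
    by (simp add: t_def \<delta>_def W_def)
  then have "P * (\<delta> - (1 - W)) \<le> P * (col_payoff n A (x t) (e t) - v)"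
    using P(1) by (intro mult_left_mono) auto
  then have W_t: "shifted_normalizer t \<le> 1 - P * (\<delta> - (1 - W)) + P\<^sup>2"
    using shifted_normalizer_even_le[OF t(1,2)] mu_le by (simp add: t_def P_def)
  have "rel_entropy n p (x (Suc t)) \<le> rel_entropy n p (x s) + (W - 1) + (shifted_normalizer t - 1)"
    using rel_entropy_step_le[OF p s(1)] rel_entropy_step_le[OF p t(1)] by (simp add: t_def W_def)
  moreover have "0 \<le> (1 - W) * (1 - P)" using W P \<delta> by (intro mult_nonneg_nonneg) auto
  moreover have "P\<^sup>2 \<le> P * (\<delta> / 2)"
    unfolding power2_eq_square using P by (intro mult_left_mono) auto
  ultimately have "rel_entropy n p (x (Suc t)) \<le> rel_entropy n p (x s) - P * \<delta> / 2"
    using W_t by (simp add: algebra_simps)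
  also have "P * \<delta> / 2 = mu t * \<delta>\<^sup>2 / (2 * c)"
    by (simp add: P_def alpha power2_eq_square)
  finally show ?thesis by (simp add: t_def \<delta>_def)
qed

lemma rel_entropy_antimono:
  assumes p: "row_minimax n m A p" and s: "1 \<le> s" "odd s" "mu s \<le> 1" and "s \<le> t"
  shows "rel_entropy n p (x t) \<le> rel_entropy n p (x s)"
proof -
  have "rel_entropy n p (x (s + 2 * k)) \<le> rel_entropy n p (x s)
      \<and> rel_entropy n p (x (Suc (s + 2 * k))) \<le> rel_entropy n p (x s)" for k
  proof (induction k)
    case 0
    show ?case using rel_entropy_odd_step[OF p s(1,2)] by simp
  next
    case (Suc k)
    define s' where "s' = s + 2 * k"
    have s': "1 \<le> s'" "odd s'" "mu (Suc s') \<le> 1"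
      using s mu_antimono[of s "Suc s'"] by (auto simp: s'_def)
    have "0 \<le> mu (Suc s') * (fmax n m A (x s') - v)\<^sup>2 / (2 * c)"
      using mu_nonneg by simp
    then have "rel_entropy n p (x (Suc (Suc s'))) \<le> rel_entropy n p (x s')"
      using rel_entropy_pair_step[OF p s'] by linarith
    moreover have "rel_entropy n p (x (Suc (Suc (Suc s')))) \<le> rel_entropy n p (x (Suc (Suc s')))"
      using rel_entropy_odd_step[OF p] s' by simp
    ultimately show ?case using Suc.IH by (simp add: s'_def)
  qed
  moreover have "t = s + 2 * ((t - s) div 2) \<or> t = Suc (s + 2 * ((t - s) div 2))"
    using \<open>s \<le> t\<close> by presburger
  ultimately show ?thesis by metis
qed

lemma rel_entropy_plus_mu_sum_bound:
  assumes p: "row_minimax n m A p" and s0: "1 \<le> s0" "odd s0" "mu s0 \<le> 1"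
    and far: "\<forall>s\<ge>s0. odd s \<longrightarrow> \<epsilon> \<le> fmax n m A (x s) - v" and "0 \<le> \<epsilon>"
  shows "rel_entropy n p (x (s0 + 2 * k)) + \<epsilon>\<^sup>2 / (4 * c) * (\<Sum>t=1..s0 + 2 * k. mu t)
    \<le> rel_entropy n p (x s0) + \<epsilon>\<^sup>2 / (4 * c) * (\<Sum>t=1..s0. mu t)"
proof (induction k)
  case (Suc k)
  define s where "s = s0 + 2 * k"
  have s: "1 \<le> s" "odd s" "mu (Suc s) \<le> 1" "s0 \<le> s"
    using s0 mu_antimono[of s0 "Suc s"] by (auto simp: s_def)
  have "\<epsilon>\<^sup>2 \<le> (fmax n m A (x s) - v)\<^sup>2"
    using far s \<open>0 \<le> \<epsilon>\<close> by (intro power_mono) auto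
  then have "mu (Suc s) * \<epsilon>\<^sup>2 / (2 * c) \<le> mu (Suc s) * (fmax n m A (x s) - v)\<^sup>2 / (2 * c)"
    using mu_nonneg by (intro divide_right_mono mult_left_mono) auto
  then have pair: "rel_entropy n p (x (Suc (Suc s))) \<le> rel_entropy n p (x s) - mu (Suc s) * \<epsilon>\<^sup>2 / (2 * c)"
    using rel_entropy_pair_step[OF p s(1-3)] by linarith
  have "(\<Sum>t=1..Suc (Suc s). mu t) \<le> (\<Sum>t=1..s. mu t) + 2 * mu (Suc s)"
    using mu_noninc by simp
  then have "\<epsilon>\<^sup>2 / (4 * c) * (\<Sum>t=1..Suc (Suc s). mu t)
      \<le> \<epsilon>\<^sup>2 / (4 * c) * ((\<Sum>t=1..s. mu t) + 2 * mu (Suc s))"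
    by (intro mult_left_mono) auto
  also have "\<dots> = \<epsilon>\<^sup>2 / (4 * c) * (\<Sum>t=1..s. mu t) + mu (Suc s) * \<epsilon>\<^sup>2 / (2 * c)"
    by (simp add: field_simps)
  finally show ?case using Suc.IH pair by (simp add: s_def)
qed simp

lemma odd_times_approach_value:
  assumes "0 < \<epsilon>"
  shows "\<exists>s\<ge>N. odd s \<and> fmax n m A (x s) < v + \<epsilon>"
proof (rule ccontr)
  assume "\<not> ?thesis"
  then have far: "\<forall>s\<ge>N. odd s \<longrightarrow> \<epsilon> \<le> fmax n m A (x s) - v" by force
  obtain p where p: "row_minimax n m A p" using ex_row_minimax by blast
  obtain t' where t': "1 \<le> t'" "mu t' \<le> 1" using mu_small by blast
  define s0 where "s0 = 2 * (N + t') + 1"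
  have s0: "1 \<le> s0" "odd s0" "mu s0 \<le> 1" "N \<le> s0"
    using t' mu_antimono[of t' s0] by (auto simp: s0_def)
  define K where "K = \<epsilon>\<^sup>2 / (4 * c)"
  have "0 < K" using assms by (simp add: K_def)
  define B where "B = (rel_entropy n p (x s0) + K * (\<Sum>t=1..s0. mu t)) / K + 1"
  have "eventually (\<lambda>T. B \<le> (\<Sum>t=1..T. mu t)) sequentially"
    using mu_div by (simp add: filterlim_at_top)
  then obtain T where "\<forall>T'\<ge>T. B \<le> (\<Sum>t=1..T'. mu t)"
    by (auto simp: eventually_sequentially)
  then have T: "B \<le> (\<Sum>t=1..s0 + 2 * T. mu t)" by simp
  have "rel_entropy n p (x (s0 + 2 * T)) + K * (\<Sum>t=1..s0 + 2 * T. mu t)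
      \<le> rel_entropy n p (x s0) + K * (\<Sum>t=1..s0. mu t)"
    unfolding K_def using rel_entropy_plus_mu_sum_bound[OF p s0(1-3)] far s0(4) assms by simp
  moreover have "K * B \<le> K * (\<Sum>t=1..s0 + 2 * T. mu t)"
    using T \<open>0 < K\<close> by simp
  moreover have "K * B = rel_entropy n p (x s0) + K * (\<Sum>t=1..s0. mu t) + K"
    using \<open>0 < K\<close> by (simp add: B_def field_simps)
  moreover have "0 \<le> rel_entropy n p (x (s0 + 2 * T))"
    using p x_in_prob_simplex x_pos s0(1)
    by (intro rel_entropy_nonneg) (auto simp: row_minimax_def)
  ultimately show False using \<open>0 < K\<close> by linarith
qed

lemma rel_entropy_tendsto_zero:
  "\<exists>xbar. row_minimax n m A xbar \<and> (\<lambda>t. rel_entropy n xbar (x t)) \<longlonglongrightarrow> 0"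
proof -
  obtain t' where t': "1 \<le> t'" "mu t' \<le> 1" using mu_small by blast
  have "\<exists>s\<ge>t'. odd s \<and> fmax n m A (x s) < v + inverse (real (Suc k))" for k
    by (rule odd_times_approach_value) simp
  then obtain \<sigma> where \<sigma>: "\<forall>k. t' \<le> \<sigma> k \<and> odd (\<sigma> k) \<and> fmax n m A (x (\<sigma> k)) < v + inverse (real (Suc k))"
    by metis
  have \<sigma>_valid: "1 \<le> \<sigma> k" "mu (\<sigma> k) \<le> 1" for k
    using \<sigma> t' mu_antimono[of t' "\<sigma> k"] by (auto intro: order_trans)
  then have "\<forall>k. x (\<sigma> k) \<in> prob_simplex n \<and> fmax n m A (x (\<sigma> k)) < v + inverse (real (Suc k))"
    using \<sigma> x_in_prob_simplex by blast
  then obtain r xbar where xbar: "row_minimax n m A xbar"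
    and conv: "\<forall>i<n. (\<lambda>k. x (\<sigma> (r k)) i) \<longlonglongrightarrow> xbar i"
    using convergent_subseq_row_minimax[of "\<lambda>k. x (\<sigma> k)"]
      tendsto_fmax_game_value[of "\<lambda>k. x (\<sigma> k)"] by auto
  have xbar_simplex: "xbar \<in> prob_simplex n" using xbar by (simp add: row_minimax_def)
  have "0 \<le> rel_entropy n xbar (x t) \<and> rel_entropy n xbar (x t) \<le> rel_entropy n xbar (x (\<sigma> (r k)))"
    if "\<sigma> (r k) \<le> t" for k t
  proof
    have "1 \<le> t" using \<sigma>_valid(1)[of "r k"] that by linarith
    then show "0 \<le> rel_entropy n xbar (x t)"
      by (intro rel_entropy_nonneg[OF xbar_simplex] x_in_prob_simplex) (auto intro: x_pos)
    show "rel_entropy n xbar (x t) \<le> rel_entropy n xbar (x (\<sigma> (r k)))"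
      using rel_entropy_antimono[OF xbar \<sigma>_valid(1) _ \<sigma>_valid(2) that] \<sigma> by blast
  qed
  moreover have "(\<lambda>k. rel_entropy n xbar (x (\<sigma> (r k)))) \<longlonglongrightarrow> 0"
    using tendsto_rel_entropy_zero[OF xbar_simplex conv] .
  ultimately show ?thesis using xbar tendsto_zero_of_dominating_subseq[of "\<sigma> \<circ> r"] by auto
qed

end

theorem theorem5:
  fixes n m :: nat
    and A :: "nat \<Rightarrow> nat \<Rightarrow> real"
    and mu :: "nat \<Rightarrow> real"
    and x y :: "nat \<Rightarrow> nat \<Rightarrow> real"
    and ystar :: "nat \<Rightarrow> real"
    and e :: "nat \<Rightarrow> nat"
    and alpha :: "nat \<Rightarrow> real"
  assumes n_pos: "n \<ge> 1" and m_pos: "m \<ge> 1"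
    and A_range: "\<forall>i<n. \<forall>j<m. 0 \<le> A i j \<and> A i j \<le> 1"
    and A_nonzero: "\<exists>i<n. \<exists>j<m. A i j \<noteq> 0"
    and mu_nonneg: "\<forall>t\<ge>1. 0 \<le> mu t"
    and mu_noninc: "\<forall>t\<ge>1. mu (Suc t) \<le> mu t"
    and mu_div: "filterlim (\<lambda>T. \<Sum>t=1..T. mu t) at_top sequentially"
    and mu_small: "\<exists>t'\<ge>1. mu t' \<le> 1"
    and x1: "x 1 \<in> prob_simplex n" and x1_pos: "\<forall>i<n. 0 < x 1 i"
    and mwu: "\<forall>t\<ge>1. \<forall>i<n. x (Suc t) i =
        x t i * exp (- mu t * (\<Sum>j<m. A i j * y t j)) /
        (\<Sum>k<n. x t k * exp (- mu t * (\<Sum>j<m. A k j * y t j)))"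
    and ystar: "col_minimax n m A ystar"
    and odd_rounds: "\<forall>t\<ge>1. odd t \<longrightarrow> y t = ystar"
    and e_choice: "\<forall>t\<ge>1. even t \<longrightarrow> e t < m \<and>
        (\<forall>j<m. payoff n m A (x (t - 1)) (unitv j) \<le> payoff n m A (x (t - 1)) (unitv (e t)))"
    and alpha_def: "\<forall>t\<ge>1. even t \<longrightarrow>
        alpha t = (fmax n m A (x (t - 1)) - game_value n m A) / max (real n / 4) 2"
    and even_rounds: "\<forall>t\<ge>1. even t \<longrightarrow>
        y t = (\<lambda>j. (1 - alpha t) * ystar j + alpha t * unitv (e t) j)"
  shows "\<exists>xbar. row_minimax n m A xbar \<and>
           (\<lambda>t. rel_entropy n xbar (x t)) \<longlonglongrightarrow> 0 \<and>
           (\<forall>i<n. (\<lambda>t. x t i) \<longlonglongrightarrow> xbar i)"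
proof -
  interpret mwu_lrca n m A mu x y ystar e alpha
    by unfold_locales (fact assms)+
  obtain xbar where xbar: "row_minimax n m A xbar"
    and lim: "(\<lambda>t. rel_entropy n xbar (x t)) \<longlonglongrightarrow> 0"
    using rel_entropy_tendsto_zero by blast
  have "eventually (\<lambda>t. x t \<in> prob_simplex n \<and> (\<forall>i<n. 0 < x t i)) sequentially"
    using x_in_prob_simplex x_pos by (auto simp: eventually_sequentially)
  then have "(\<lambda>t. x t i) \<longlonglongrightarrow> xbar i" if "i < n" for i
    using xbar tendsto_of_rel_entropy_tendsto_zero[OF _ _ lim that] by (simp add: row_minimax_def)
  then show ?thesis using xbar lim by blast
qed

end
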